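(* Consider the sample version of the stable PC-like algorithm (SPC4LWF), in which each conditional independence query "$u\perp\!\!\!\perp v\mid S$" is answered by a fixed (possibly erroneous, e.g. estimated from data by statistical tests) deterministic rule depending only on $(u,v,S)$, with the answer symmetric in $u$ and $v$. Then the skeleton (the undirected graph $H$ obtained at the end of the skeleton recovery phase) is the same for every ordering $\mathrm{order}(V)$ of the variables.
   Context: Let $V$ be a finite set of variables. Skeleton recovery phase of SPC4LWF with an ordering $\mathrm{order}(V)$: let $H$ be the complete undirected graph on $V$. For $i=0,1,\dots,|V|-2$: first, for every vertex $x$, store $a_H(x)$ := the current set of vertices adjacent to $x$ in $H$; then, while possible, select (in an order determined by $\mathrm{order}(V)$) an ordered pair $(u,v)$ with $u\in a_H(v)$, $u,v$ still adjacent in $H$, and $|a_H(u)\setminus\{v\}|\ge i$; if there is $S\subseteq a_H(u)\setminus\{v\}$ with $|S|=i$ for which the query $u\perp\!\!\!\perp v\mid S$ is answered "independent", set $S_{uv}=S_{vu}=S$ and remove the edge $u-v$ from $H$. The stored sets $a_H$ are not updated within a level $i$; they are recomputed only at the start of the next level. *)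

theory Defs
  imports Main
begin

text \<open>Undirected graphs on a vertex set are represented by their edge sets,
  each edge being a two-element set.\<close>

definition complete_graph :: "'a set \<Rightarrow> 'a set set" where
  "complete_graph V = {{u, v} | u v. u \<in> V \<and> v \<in> V \<and> u \<noteq> v}"

definition adj :: "'a set set \<Rightarrow> 'a \<Rightarrow> 'a set" where
  "adj H x = {y. {x, y} \<in> H}"

definition spc_step ::
  "('a \<Rightarrow> 'a \<Rightarrow> 'a set \<Rightarrow> bool) \<Rightarrow> ('a \<Rightarrow> 'a set) \<Rightarrow> nat \<Rightarrow> 'a \<times> 'a \<Rightarrow> 'a set set \<Rightarrow> 'a set set" where
  "spc_step indep a i p H =
     (let u = fst p; v = snd p in
      if u \<in> a v \<and> {u, v} \<in> H \<and> i \<le> card (a u - {v}) \<and>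
         (\<exists>S. S \<subseteq> a u - {v} \<and> card S = i \<and> indep u v S)
      then H - {{u, v}} else H)"

definition spc_level ::
  "('a \<Rightarrow> 'a \<Rightarrow> 'a set \<Rightarrow> bool) \<Rightarrow> ('a \<times> 'a) list \<Rightarrow> nat \<Rightarrow> 'a set set \<Rightarrow> 'a set set" where
  "spc_level indep ps i H = fold (spc_step indep (adj H) i) ps H"

text \<open>Skeleton recovery phase: levels i = 0, ..., |V| - 2 starting from the complete graph.
  sel ord i is the sequence in which ordered pairs are selected at level i under ordering ord.\<close>
definition spc_skeleton ::
  "'a set \<Rightarrow> ('a \<Rightarrow> 'a \<Rightarrow> 'a set \<Rightarrow> bool) \<Rightarrow> ('a list \<Rightarrow> nat \<Rightarrow> ('a \<times> 'a) list) \<Rightarrow> 'a list \<Rightarrow> 'a set set" where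
  "spc_skeleton V indep sel ord =
     fold (\<lambda>i H. spc_level indep (sel ord i) i H)
          (filter (\<lambda>i. i + 2 \<le> card V) [0..<card V])
          (complete_graph V)"

definition is_ordering :: "'a set \<Rightarrow> 'a list \<Rightarrow> bool" where
  "is_ordering V ord \<longleftrightarrow> distinct ord \<and> set ord = V"

end

theory Submission
  imports Defs
begin

text \<open>Within a level the adjacency sets are frozen, so whether the pair (u,v) triggers a
  removal does not depend on the current graph; the remaining test in spc_step, that the
  edge is still present, is irrelevant because removing an absent edge changes nothing.
  Hence a level removes exactly the edges of the selected pairs that pass the frozen test,
  whatever the order of selection, and the skeleton depends on the selection sequences
  only through their sets, which are the same for every ordering.\<close>

definition spc_test ::
  "('a \<Rightarrow> 'a \<Rightarrow> 'a set \<Rightarrow> bool) \<Rightarrow> ('a \<Rightarrow> 'a set) \<Rightarrow> nat \<Rightarrow> 'a \<Rightarrow> 'a \<Rightarrow> bool" where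
  "spc_test indep a i u v \<longleftrightarrow>
     u \<in> a v \<and> i \<le> card (a u - {v}) \<and>
     (\<exists>S. S \<subseteq> a u - {v} \<and> card S = i \<and> indep u v S)"

lemma spc_step_eq_Diff:
  "spc_step indep a i (u, v) H = (if spc_test indep a i u v then H - {{u, v}} else H)"
  unfolding spc_step_def spc_test_def by auto

lemma fold_spc_step_eq_Diff:
  "fold (spc_step indep a i) ps H =
     H - {{u, v} | u v. (u, v) \<in> set ps \<and> spc_test indep a i u v}"
proof (induction ps arbitrary: H)
  case Nil
  then show ?case by simp
next
  case (Cons p ps)
  obtain u v where "p = (u, v)" by fastforce
  then show ?case
    using Cons.IH[of "spc_step indep a i p H"] by (auto simp: spc_step_eq_Diff)
qed

lemma spc_level_cong_set:
  assumes "set ps = set qs"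
  shows "spc_level indep ps i H = spc_level indep qs i H"
  unfolding spc_level_def fold_spc_step_eq_Diff assms ..

theorem theorem2:
  fixes V :: "'a set"
    and indep :: "'a \<Rightarrow> 'a \<Rightarrow> 'a set \<Rightarrow> bool"
    and sel :: "'a list \<Rightarrow> nat \<Rightarrow> ('a \<times> 'a) list"
    and ord1 ord2 :: "'a list"
  assumes "finite V"
    and "\<And>u v S. indep u v S = indep v u S"
    and "\<And>ord i. is_ordering V ord \<Longrightarrow>
           set (sel ord i) = {(u, v). u \<in> V \<and> v \<in> V \<and> u \<noteq> v}"
    and "is_ordering V ord1"
    and "is_ordering V ord2"
  shows "spc_skeleton V indep sel ord1 = spc_skeleton V indep sel ord2"
proof -
  have "set (sel ord1 i) = set (sel ord2 i)" for i
    using assms(3-5) by blast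
  then have "spc_level indep (sel ord1 i) i = spc_level indep (sel ord2 i) i" for i
    using spc_level_cong_set by blast
  then show ?thesis
    unfolding spc_skeleton_def by simp
qed

end
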